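(* Let $H$ satisfy the standing assumptions (H), let $L(\alpha):=\sup_{p\in\mathbb R^d}(\langle p,\alpha\rangle-H(p))$ be its Legendre transform, let $m\in\mathscr C^{1,2}_{\mathrm{per}}((0,T)\times\mathbb T^d)$ and let $(\lambda_H(m),\varphi_H)$ be the eigenpair of $\partial_t-\Delta+H(\nabla_x\cdot)+m$. For a bounded, $T$-periodic in $t$, vector field $\alpha:(0,T)\times\mathbb T^d\to\mathbb R^d$, let $\eta_\alpha$ be the unique solution of \[-\partial_t\eta_\alpha-\Delta\eta_\alpha-\nabla\cdot(\alpha\eta_\alpha)=0,\quad\eta_\alpha(T,\cdot)=\eta_\alpha(0,\cdot),\quad\eta_\alpha\ge0,\quad\int_{\mathbb T^d}\eta_\alpha(t,\cdot)=\tfrac1T .\] Then for every such $\alpha$, \[\iint_{(0,T)\times\mathbb T^d}\big(m-L(\alpha)\big)\,d\eta_\alpha\le-\lambda_H(m),\] with equality for $\alpha=\nabla_pH(\nabla_x\varphi_H)$; hence $-\lambda_H(m)=\max_\alpha\iint(m-L(\alpha))\,d\eta_\alpha$.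
   Context: $\mathbb T^d$ is the $d$-dimensional torus and $T>0$ is fixed. $\mathscr C^{1,2}_{\mathrm{per}}((0,T)\times\mathbb T^d)$ denotes functions that are $T$-periodic in $t$, $\mathbb T^d$-periodic in $x$, $\mathscr C^1$ in $t$ and $\mathscr C^2$ in $x$. Standing assumptions (H) on $H:\mathbb R^d\to\mathbb R$: $H$ is $\mathscr C^2$; $H(p)>H(0)=0$ for $p\neq0$; $\nabla^2_{pp}H(p)$ is symmetric positive definite for $p\neq 0$; there is a continuous, coercive, convex, non-negative function $\mathcal H$ on $[0,\infty)$ with $\mathcal H(a)>\mathcal H(0)=0$ for $a>0$ such that $\mathcal H\big(\|f-\frac{1}{|\mathbb T^d|}\int_{\mathbb T^d}f\|_{L^1(\mathbb T^d)}\big)\le\int_{\mathbb T^d}H(\nabla f)$ for every $f\in\mathscr C^2(\mathbb T^d)$; and there is $\beta\in(0,1)$ with $aH(p)\ge H(a^\beta p)$ for all $a\in(0,1)$, $p\in\mathbb R^d$. Eigenpair: $(\lambda_H(m),\varphi_H)$ is the unique pair with $\lambda_H(m)\in\mathbb R$, $\varphi_H\in\mathscr C^{1,2}_{\mathrm{per}}$, $\iint\varphi_H=0$, and $\lambda_H(m)+\partial_t\varphi_H-\Delta\varphi_H+H(\nabla_x\varphi_H)=-m$ in $(0,T)\times\mathbb T^d$. The measures $\eta_\alpha$ are regarded as probability measures on $(0,T)\times\mathbb T^d$. *)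

theory Defs
  imports "HOL-Analysis.Analysis"
begin

text \<open>The torus T^d is represented by Z^d-periodic functions on real^'d
  (unit torus, fundamental cell the unit cube).  Time-space functions have
  type real => real^'d => real.\<close>

definition pd :: "(real^'d \<Rightarrow> real) \<Rightarrow> real^'d \<Rightarrow> 'd \<Rightarrow> real" where
  "pd f x i = deriv (\<lambda>h. f (x + h *\<^sub>R axis i 1)) 0"

definition gradv :: "(real^'d \<Rightarrow> real) \<Rightarrow> real^'d \<Rightarrow> real^'d" where
  "gradv f x = (\<chi> i. pd f x i)"

definition hessv :: "(real^'d \<Rightarrow> real) \<Rightarrow> real^'d \<Rightarrow> real^'d^'d" where
  "hessv f x = (\<chi> i j. pd (\<lambda>y. pd f y i) x j)"

definition dt :: "(real \<Rightarrow> real^'d \<Rightarrow> real) \<Rightarrow> real \<Rightarrow> real^'d \<Rightarrow> real" where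
  "dt u t x = deriv (\<lambda>s. u s x) t"

definition grad_x :: "(real \<Rightarrow> real^'d \<Rightarrow> real) \<Rightarrow> real \<Rightarrow> real^'d \<Rightarrow> real^'d" where
  "grad_x u t x = gradv (u t) x"

definition lap_x :: "(real \<Rightarrow> real^'d \<Rightarrow> real) \<Rightarrow> real \<Rightarrow> real^'d \<Rightarrow> real" where
  "lap_x u t x = (\<Sum>i\<in>UNIV. pd (\<lambda>y. pd (u t) y i) x i)"

text \<open>Unit cell of the torus (closed, for Lebesgue integrals) and half-open
  fundamental domain (for measures).\<close>
definition cell :: "(real^'d) set" where
  "cell = cbox 0 One"

definition hcell :: "(real^'d) set" where
  "hcell = {x. \<forall>i. 0 \<le> x $ i \<and> x $ i < 1}"

definition periodic_x :: "(real^'d \<Rightarrow> 'b) \<Rightarrow> bool" where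
  "periodic_x f \<longleftrightarrow> (\<forall>x i. f (x + axis i 1) = f x)"

definition C2per :: "(real^'d \<Rightarrow> real) \<Rightarrow> bool" where
  "C2per f \<longleftrightarrow> periodic_x f \<and>
     (\<exists>fx fxx. continuous_on UNIV f \<and> continuous_on UNIV fx \<and> continuous_on UNIV fxx \<and>
        (\<forall>x. (f has_derivative (\<lambda>h. fx x \<bullet> h)) (at x)) \<and>
        (\<forall>x. (fx has_derivative (\<lambda>h. fxx x *v h)) (at x)))"

definition C12per :: "real \<Rightarrow> (real \<Rightarrow> real^'d \<Rightarrow> real) \<Rightarrow> bool" where
  "C12per T u \<longleftrightarrow>
     (\<forall>t x. u (t + T) x = u t x) \<and> (\<forall>t. periodic_x (u t)) \<and>
     (\<exists>ut ux uxx.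
        continuous_on UNIV (\<lambda>z. u (fst z) (snd z)) \<and>
        continuous_on UNIV (\<lambda>z. ut (fst z) (snd z)) \<and>
        continuous_on UNIV (\<lambda>z. ux (fst z) (snd z)) \<and>
        continuous_on UNIV (\<lambda>z. uxx (fst z) (snd z) :: real^'d^'d) \<and>
        (\<forall>t x. ((\<lambda>s. u s x) has_real_derivative ut t x) (at t)) \<and>
        (\<forall>t x. (u t has_derivative (\<lambda>h. ux t x \<bullet> h)) (at x)) \<and>
        (\<forall>t x. (ux t has_derivative (\<lambda>h. uxx t x *v h)) (at x)))"

definition H_assms :: "(real^'d \<Rightarrow> real) \<Rightarrow> bool" where
  "H_assms H \<longleftrightarrow>
     (\<exists>DH D2H. (\<forall>p. (H has_derivative (\<lambda>h. DH p \<bullet> h)) (at p)) \<and>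
               (\<forall>p. (DH has_derivative (\<lambda>h. D2H p *v h)) (at p)) \<and>
               continuous_on UNIV (D2H :: real^'d \<Rightarrow> real^'d^'d)) \<and>
     H 0 = 0 \<and> (\<forall>p. p \<noteq> 0 \<longrightarrow> H p > 0) \<and>
     (\<forall>p. p \<noteq> 0 \<longrightarrow> transpose (hessv H p) = hessv H p \<and>
                       (\<forall>v. v \<noteq> 0 \<longrightarrow> v \<bullet> (hessv H p *v v) > 0)) \<and>
     (\<exists>\<H> :: real \<Rightarrow> real.
        continuous_on {0..} \<H> \<and> convex_on {0..} \<H> \<and> filterlim \<H> at_top at_top \<and>
        (\<forall>a\<ge>0. \<H> a \<ge> 0) \<and> \<H> 0 = 0 \<and> (\<forall>a>0. \<H> a > 0) \<and>
        (\<forall>f. C2per f \<longrightarrow>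
           \<H> (\<integral>x\<in>cell. \<bar>f x - (\<integral>y\<in>cell. f y \<partial>lborel) / measure lborel (cell :: (real^'d) set)\<bar> \<partial>lborel)
             \<le> (\<integral>x\<in>cell. H (gradv f x) \<partial>lborel))) \<and>
     (\<exists>\<beta>. 0 < \<beta> \<and> \<beta> < 1 \<and> (\<forall>a p. 0 < a \<and> a < 1 \<longrightarrow> a * H p \<ge> H ((a powr \<beta>) *\<^sub>R p)))"

definition legendre :: "(real^'d \<Rightarrow> real) \<Rightarrow> real^'d \<Rightarrow> real" where
  "legendre H a = (SUP p. p \<bullet> a - H p)"

definition admissible :: "real \<Rightarrow> (real \<Rightarrow> real^'d \<Rightarrow> real^'d) \<Rightarrow> bool" where
  "admissible T \<alpha> \<longleftrightarrow>
     (\<lambda>z. \<alpha> (fst z) (snd z)) \<in> borel_measurable borel \<and>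
     (\<exists>B. \<forall>t x. norm (\<alpha> t x) \<le> B) \<and>
     (\<forall>t x. \<alpha> (t + T) x = \<alpha> t x) \<and> (\<forall>t. periodic_x (\<alpha> t))"

text \<open>eta is a (weak, measure-valued) solution of
  -d_t eta - Lap eta - div(alpha eta) = 0, eta(T)=eta(0), eta >= 0,
  int_{T^d} eta(t) = 1/T, viewed as a probability measure on [0,T) x T^d.
  Time-periodicity is encoded through the periodic test functions.\<close>
definition fp_sol :: "real \<Rightarrow> (real \<Rightarrow> real^'d \<Rightarrow> real^'d) \<Rightarrow> (real \<times> (real^'d)) measure \<Rightarrow> bool" where
  "fp_sol T \<alpha> \<eta> \<longleftrightarrow>
     sets \<eta> = sets borel \<and> emeasure \<eta> (space \<eta>) = 1 \<and>
     emeasure \<eta> ({0..<T} \<times> hcell) = 1 \<and>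
     (\<forall>A \<in> sets borel. A \<subseteq> {0..<T} \<longrightarrow> measure \<eta> (A \<times> hcell) = measure lborel A / T) \<and>
     (\<forall>\<psi>. C12per T \<psi> \<longrightarrow>
        (\<integral>z. dt \<psi> (fst z) (snd z) - lap_x \<psi> (fst z) (snd z)
               + \<alpha> (fst z) (snd z) \<bullet> grad_x \<psi> (fst z) (snd z) \<partial>\<eta>) = 0)"

end

theory Submission
  imports Defs
begin

text \<open>Testing the eigenvalue equation against \<eta> and subtracting the weak Fokker--Planck
  equation of \<eta> with test function \<phi> removes the time-derivative, diffusion and transport terms:
  \<integral> (m - L(\<alpha>)) d\<eta> = -\<lambda> - \<integral> (L(\<alpha>) - (\<nabla>\<phi>\<bullet>\<alpha> - H(\<nabla>\<phi>))) d\<eta>.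
  The last integrand is the Fenchel--Young gap. It is nonnegative, and it vanishes for
  \<alpha> = \<nabla>H(\<nabla>\<phi>) because H lies above its tangent planes (its Hessian is positive
  semidefinite). The scaling hypothesis in (H) forces superlinear growth of H, so L is finite,
  hence convex and continuous; since \<eta> lives on a single periodicity cell, all integrands
  are bounded there and therefore \<eta>-integrable.\<close>

section \<open>Partial derivatives\<close>

lemma pd_eqI:
  fixes F :: "real^'d \<Rightarrow> real"
  assumes "(F has_derivative F') (at x)"
  shows "pd F x j = F' (axis j 1)"
proof -
  have "((\<lambda>h::real. x + h *\<^sub>R axis j 1) has_derivative (\<lambda>h. h *\<^sub>R axis j 1)) (at 0)"
    by (auto intro!: derivative_eq_intros)
  from has_derivative_compose[OF this] assms
  have "((\<lambda>h. F (x + h *\<^sub>R axis j 1)) has_derivative (\<lambda>h. F' (h *\<^sub>R axis j 1))) (at 0)"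
    by (simp add: o_def)
  moreover have "(\<lambda>h. F' (h *\<^sub>R axis j 1)) = (*) (F' (axis j 1))"
    using has_derivative_linear[OF assms] by (simp add: linear_scale fun_eq_iff)
  ultimately have "((\<lambda>h. F (x + h *\<^sub>R axis j 1)) has_real_derivative F' (axis j 1)) (at 0)"
    by (simp add: has_field_derivative_def)
  then show ?thesis unfolding pd_def by (rule DERIV_imp_deriv)
qed

lemma gradv_eqI:
  fixes F :: "real^'d \<Rightarrow> real"
  assumes "(F has_derivative (\<lambda>h. D \<bullet> h)) (at x)"
  shows "gradv F x = D"
  using pd_eqI[OF assms] by (simp add: gradv_def vec_eq_iff inner_axis)

lemma pd_pd_eqI:
  fixes F :: "real^'d \<Rightarrow> real"
  assumes "\<And>y. (F has_derivative (\<lambda>h. D y \<bullet> h)) (at y)"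
    and "(D has_derivative (\<lambda>h. D2 *v h)) (at x)"
  shows "pd (\<lambda>y. pd F y i) x j = D2 $ i $ j"
proof -
  have "(\<lambda>y. pd F y i) = (\<lambda>y. D y $ i)"
    using pd_eqI[OF assms(1)] by (simp add: inner_axis)
  moreover have "((\<lambda>y. D y $ i) has_derivative (\<lambda>h. (D2 *v h) $ i)) (at x)"
    using bounded_linear.has_derivative[OF bounded_linear_vec_nth assms(2)] .
  ultimately show ?thesis
    by (simp add: pd_eqI matrix_vector_mult_def axis_def if_distrib cong: if_cong)
qed

lemma hessv_eqI:
  fixes F :: "real^'d \<Rightarrow> real"
  assumes "\<And>y. (F has_derivative (\<lambda>h. D y \<bullet> h)) (at y)"
    and "\<And>y. (D has_derivative (\<lambda>h. D2 y *v h)) (at y)"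
  shows "hessv F x = D2 x"
  using pd_pd_eqI[OF assms(1) assms(2)] by (simp add: hessv_def vec_eq_iff)

section \<open>Convexity and growth of the Hamiltonian\<close>

lemma continuous_nonneg_of_pos_off_zero:
  fixes Q :: "'a::{real_normed_vector, perfect_space} \<Rightarrow> real"
  assumes "continuous_on UNIV Q" and "\<And>y. y \<noteq> 0 \<Longrightarrow> 0 < Q y"
  shows "0 \<le> Q y"
proof (rule continuous_ge_on_closure[of "- {0}" Q])
  show "y \<in> closure (- {0})"
    using islimpt_UNIV[of y] islimpt_punctured[of y UNIV] by (auto simp: closure_def Compl_eq_Diff_UNIV)
qed (use assms in \<open>auto intro: less_imp_le continuous_on_subset\<close>)

lemma above_tangent_of_hessian_nonneg:
  fixes H :: "real^'d \<Rightarrow> real"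
  assumes dH: "\<And>p. (H has_derivative (\<lambda>h. DH p \<bullet> h)) (at p)"
    and d2H: "\<And>p. (DH has_derivative (\<lambda>h. D2H p *v h)) (at p)"
    and psd: "\<And>p v. 0 \<le> v \<bullet> (D2H p *v v)"
  shows "H p + DH p \<bullet> (q - p) \<le> H q"
proof -
  define v where "v = q - p"
  define g where "g = (\<lambda>s::real. H (p + s *\<^sub>R v))"
  define g' where "g' = (\<lambda>s::real. DH (p + s *\<^sub>R v) \<bullet> v)"
  have line: "((\<lambda>s::real. p + s *\<^sub>R v) has_derivative (\<lambda>h. h *\<^sub>R v)) (at s)" for s
    by (auto intro!: derivative_eq_intros)
  have g: "(g has_real_derivative g' s) (at s)" for s
    using has_derivative_compose[OF line dH]
    by (simp add: g_def g'_def o_def has_field_derivative_def mult_commute_abs)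
  have g': "(g' has_real_derivative v \<bullet> (D2H (p + s *\<^sub>R v) *v v)) (at s)" for s
    using bounded_linear.has_derivative[OF bounded_linear_inner_right[of v]
        has_derivative_compose[OF line d2H]]
    by (simp add: g'_def o_def has_field_derivative_def inner_commute matrix_vector_mult_scaleR
        mult_commute_abs)
  have "g' x \<le> g' y" if "x \<le> y" for x y
    using DERIV_nonneg_imp_nondecreasing[OF that] g' psd by blast
  then have "convex_on UNIV g"
    by (intro convex_on_realI[where f' = g']) (auto intro: g)
  then have "g' 0 * (1 - 0) \<le> g 1 - g 0"
    by (rule convex_on_imp_above_tangent) (auto intro: has_field_derivative_at_within g)
  then show ?thesis by (simp add: g_def g'_def v_def)
qed

lemma superlinear_growth:
  fixes H :: "'a::euclidean_space \<Rightarrow> real"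
  assumes cont: "continuous_on UNIV H" and pos: "\<And>p. p \<noteq> 0 \<Longrightarrow> 0 < H p"
    and \<beta>: "0 < \<beta>" "\<beta> < 1" and scaling: "\<And>a p. 0 < a \<Longrightarrow> a < 1 \<Longrightarrow> H ((a powr \<beta>) *\<^sub>R p) \<le> a * H p"
  obtains c where "0 < c" "\<And>p. 1 \<le> norm p \<Longrightarrow> c * norm p powr (1/\<beta>) \<le> H p"
proof -
  have "sphere (0::'a) 1 \<noteq> {}" by (simp add: sphere_eq_empty)
  then obtain u where u: "u \<in> sphere 0 1" and min: "\<And>w. w \<in> sphere 0 1 \<Longrightarrow> H u \<le> H w"
    using continuous_attains_inf[OF compact_sphere _ continuous_on_subset[OF cont]] by blast
  have "u \<noteq> 0" using u by auto
  then have "0 < H u" by (rule pos)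
  moreover have "H u * norm p powr (1/\<beta>) \<le> H p" if "1 \<le> norm p" for p
  proof (cases "norm p = 1")
    case True then show ?thesis using min[of p] by simp
  next
    case False
    define s where "s = norm p"
    have s: "1 < s" using that False by (simp add: s_def)
    define a where "a = (1/s) powr (1/\<beta>)"
    have a: "0 < a" "a < 1" "a powr \<beta> = 1/s"
      using s \<beta> by (auto simp: a_def powr_powr powr01_less_one)
    have "H u \<le> H ((1/s) *\<^sub>R p)" by (rule min) (use s in \<open>auto simp: s_def\<close>)
    also have "\<dots> \<le> a * H p" using scaling[OF a(1,2)] a(3) by metis
    finally have "H u / a \<le> H p" using a by (simp add: field_simps)
    moreover have "H u / a = H u * s powr (1/\<beta>)" using s by (simp add: a_def powr_divide)
    ultimately show ?thesis by (simp add: s_def)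
  qed
  ultimately show ?thesis using that by blast
qed

lemma bdd_above_conjugate_of_superlinear:
  fixes H :: "'a::euclidean_space \<Rightarrow> real"
  assumes nonneg: "\<And>p. 0 \<le> H p"
    and c: "0 < c" and r: "0 < r" and growth: "\<And>p. 1 \<le> norm p \<Longrightarrow> c * norm p powr (1 + r) \<le> H p"
  shows "bdd_above (range (\<lambda>p. p \<bullet> a - H p))"
proof (rule bdd_aboveI2)
  define S where "S = max 1 ((norm a / c) powr (1/r))"
  fix p
  have pa: "p \<bullet> a \<le> norm p * norm a" by (metis Cauchy_Schwarz_ineq2 abs_le_iff)
  show "p \<bullet> a - H p \<le> S * norm a"
  proof (cases "norm p \<le> S")
    case True
    then show ?thesis using pa nonneg[of p] mult_right_mono[OF True norm_ge_zero[of a]] by linarith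
  next
    case False
    then have p1: "1 < norm p" by (simp add: S_def)
    have "norm a / c = ((norm a / c) powr (1/r)) powr r"
      using r c by (simp add: powr_powr)
    also have "\<dots> \<le> norm p powr r" using False r by (intro powr_mono2) (auto simp: S_def)
    finally have "norm a \<le> c * norm p powr r" using c by (simp add: field_simps)
    then have "norm p * norm a \<le> norm p * (c * norm p powr r)"
      by (simp add: mult_left_mono)
    also have "\<dots> = c * norm p powr (1 + r)"
      using p1 by (simp add: powr_add)
    finally have "norm p * norm a \<le> c * norm p powr (1 + r)" .
    moreover have "0 \<le> S * norm a" by (simp add: S_def)
    ultimately show ?thesis using pa growth[of p] p1 by linarith
  qed
qed

section \<open>The Legendre transform\<close>

lemma legendre_upper:
  assumes "bdd_above (range (\<lambda>p. p \<bullet> a - H p))"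
  shows "p \<bullet> a - H p \<le> legendre H a"
  unfolding legendre_def by (rule cSUP_upper[OF _ assms]) simp

lemma legendre_least:
  assumes "\<And>p. p \<bullet> a - H p \<le> K"
  shows "legendre H a \<le> K"
  unfolding legendre_def by (rule cSUP_least) (auto intro: assms)

lemma legendre_eq_of_above_tangent:
  assumes "\<And>q. H p + D \<bullet> (q - p) \<le> H q"
  shows "legendre H D = p \<bullet> D - H p"
proof (rule antisym)
  have *: "q \<bullet> D - H q \<le> p \<bullet> D - H p" for q
    using assms[of q] by (simp add: inner_diff_right inner_commute)
  then show "legendre H D \<le> p \<bullet> D - H p" by (rule legendre_least)
  show "p \<bullet> D - H p \<le> legendre H D" by (rule legendre_upper, rule bdd_aboveI2, rule *)
qed

lemma convex_on_legendre:
  fixes H :: "real^'d \<Rightarrow> real"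
  assumes "\<And>a. bdd_above (range (\<lambda>p. p \<bullet> a - H p))"
  shows "convex_on UNIV (legendre H)"
proof
  fix x y :: "real^'d" and t :: real
  assume t: "0 < t" "t < 1"
  show "legendre H ((1 - t) *\<^sub>R x + t *\<^sub>R y) \<le> (1 - t) * legendre H x + t * legendre H y"
  proof (rule legendre_least)
    fix p
    have "p \<bullet> ((1 - t) *\<^sub>R x + t *\<^sub>R y) - H p = (1 - t) * (p \<bullet> x - H p) + t * (p \<bullet> y - H p)"
      by (simp add: inner_add_right algebra_simps)
    also have "\<dots> \<le> (1 - t) * legendre H x + t * legendre H y"
      using t by (intro add_mono mult_left_mono legendre_upper assms) auto
    finally show "p \<bullet> ((1 - t) *\<^sub>R x + t *\<^sub>R y) - H p \<le> (1 - t) * legendre H x + t * legendre H y" .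
  qed
qed simp

locale hamiltonian =
  fixes H :: "real^'d \<Rightarrow> real"
  assumes H_assms: "H_assms H"
begin

lemma H_zero: "H 0 = 0"
  using H_assms unfolding H_assms_def by (elim conjE)

lemma H_pos: "p \<noteq> 0 \<Longrightarrow> 0 < H p"
  using H_assms unfolding H_assms_def by (elim conjE) simp

lemma H_nonneg: "0 \<le> H p"
  using H_zero H_pos by (cases "p = 0") (auto intro: less_imp_le)

lemma H_twice_differentiable:
  "\<exists>DH D2H. (\<forall>p. (H has_derivative (\<lambda>h. DH p \<bullet> h)) (at p))
     \<and> (\<forall>p. (DH has_derivative (\<lambda>h. D2H p *v h)) (at p)) \<and> continuous_on UNIV D2H"
  using H_assms unfolding H_assms_def by (elim conjE)

lemma hessv_H_pos: "p \<noteq> 0 \<Longrightarrow> v \<noteq> 0 \<Longrightarrow> 0 < v \<bullet> (hessv H p *v v)"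
  using H_assms unfolding H_assms_def by (elim conjE) simp

lemma H_scaling:
  "\<exists>\<beta>. 0 < \<beta> \<and> \<beta> < 1 \<and> (\<forall>a p. 0 < a \<and> a < 1 \<longrightarrow> a * H p \<ge> H ((a powr \<beta>) *\<^sub>R p))"
  using H_assms unfolding H_assms_def by (elim conjE)

lemma has_derivative_H: "(H has_derivative (\<lambda>h. gradv H p \<bullet> h)) (at p)"
proof -
  obtain DH where "\<And>p. (H has_derivative (\<lambda>h. DH p \<bullet> h)) (at p)"
    using H_twice_differentiable by blast
  moreover from this have "gradv H p = DH p" by (rule gradv_eqI)
  ultimately show ?thesis by simp
qed

lemma gradv_H_has_psd_derivative:
  "\<exists>D2H. (\<forall>p. (gradv H has_derivative (\<lambda>h. D2H p *v h)) (at p)) \<and> (\<forall>p v. 0 \<le> v \<bullet> (D2H p *v v))"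
proof -
  obtain DH D2H where dH: "\<And>p. (H has_derivative (\<lambda>h. DH p \<bullet> h)) (at p)"
    and d2H: "\<And>p. (DH has_derivative (\<lambda>h. D2H p *v h)) (at p)"
    and cont: "continuous_on UNIV D2H"
    using H_twice_differentiable by blast
  have "gradv H = DH" using gradv_eqI[OF dH] by blast
  moreover have "0 \<le> v \<bullet> (D2H y *v v)" for y v
  proof (cases "v = 0")
    case False
    have "continuous_on UNIV (\<lambda>y. D2H y *v v)"
      using cont unfolding matrix_vector_mult_def by (intro continuous_on_vec_lambda continuous_intros)
    then have "continuous_on UNIV (\<lambda>y. v \<bullet> (D2H y *v v))"
      by (rule continuous_on_inner[OF continuous_on_const])
    \<comment> \<open>Definiteness is only assumed off the origin; continuity of the Hessian extends
      semidefiniteness to it.\<close>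
    moreover have "0 < v \<bullet> (D2H p *v v)" if "p \<noteq> 0" for p
      using hessv_H_pos[OF that False] hessv_eqI[OF dH d2H] by simp
    ultimately show ?thesis by (rule continuous_nonneg_of_pos_off_zero)
  qed simp
  ultimately show ?thesis using d2H by auto
qed

lemma continuous_on_H: "continuous_on UNIV H"
  by (meson continuous_at_imp_continuous_on has_derivative_H has_derivative_continuous)

lemma continuous_on_gradv_H: "continuous_on UNIV (gradv H)"
proof -
  obtain D2H where "\<And>p. (gradv H has_derivative (\<lambda>h. D2H p *v h)) (at p)"
    using gradv_H_has_psd_derivative by blast
  then show ?thesis by (meson continuous_at_imp_continuous_on has_derivative_continuous)
qed

lemma H_above_tangent: "H p + gradv H p \<bullet> (q - p) \<le> H q"
proof -
  obtain D2H where "\<And>p. (gradv H has_derivative (\<lambda>h. D2H p *v h)) (at p)"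
    and "\<And>p v. 0 \<le> v \<bullet> (D2H p *v v)"
    using gradv_H_has_psd_derivative by blast
  then show ?thesis by (rule above_tangent_of_hessian_nonneg[OF has_derivative_H])
qed

lemma bdd_above_conjugate: "bdd_above (range (\<lambda>p. p \<bullet> a - H p))"
proof -
  obtain \<beta> where \<beta>: "0 < \<beta>" "\<beta> < 1"
    and scaling: "\<And>a p. 0 < a \<Longrightarrow> a < 1 \<Longrightarrow> H ((a powr \<beta>) *\<^sub>R p) \<le> a * H p"
    using H_scaling by blast
  obtain c where c: "0 < c" and growth: "\<And>p. 1 \<le> norm p \<Longrightarrow> c * norm p powr (1/\<beta>) \<le> H p"
    using superlinear_growth[OF continuous_on_H H_pos \<beta> scaling] by blast
  have "0 < 1/\<beta> - 1" using \<beta> by (simp add: field_simps)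
  moreover have "c * norm p powr (1 + (1/\<beta> - 1)) \<le> H p" if "1 \<le> norm p" for p
    using growth[OF that] by simp
  ultimately show ?thesis by (rule bdd_above_conjugate_of_superlinear[OF H_nonneg c])
qed

lemma fenchel_young: "p \<bullet> a - H p \<le> legendre H a"
  by (rule legendre_upper[OF bdd_above_conjugate])

lemma legendre_gradv_H: "legendre H (gradv H p) = p \<bullet> gradv H p - H p"
  by (rule legendre_eq_of_above_tangent[OF H_above_tangent])

lemma continuous_on_legendre: "continuous_on UNIV (legendre H)"
proof -
  have "convex_on UNIV (legendre H)" by (rule convex_on_legendre[OF bdd_above_conjugate])
  then show ?thesis by (rule convex_on_continuous[OF open_UNIV])
qed

end

section \<open>Periodic functions\<close>

lemma periodic_shift_int:
  fixes g :: "real \<Rightarrow> 'b"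
  assumes "\<And>y. g (y + c) = g y"
  shows "g (y + of_int k * c) = g y"
proof -
  have nat: "g (y + real n * c) = g y" for n y
    by (induction n arbitrary: y) (auto simp: distrib_right assms add.assoc[symmetric])
  show ?thesis
  proof (cases "0 \<le> k")
    case True
    then show ?thesis using nat[where n = "nat k" and y = y] by simp
  next
    case False
    then show ?thesis using nat[where n = "nat (- k)" and y = "y + of_int k * c"] by simp
  qed
qed

lemma periodic_x_shift_sum:
  assumes "periodic_x g" and "finite S"
  shows "g (x + (\<Sum>i\<in>S. of_int (k i) *\<^sub>R axis i 1)) = g x"
  using assms(2)
proof (induction S arbitrary: x rule: finite_induct)
  case (insert j S)
  have shift: "g (y + of_int (k j) *\<^sub>R axis j 1) = g y" for y
    using periodic_shift_int[where g = "\<lambda>s. g (y + s *\<^sub>R axis j 1)" and c = 1 and y = 0]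
      assms(1) unfolding periodic_x_def by (simp add: scaleR_add_left add.assoc[symmetric])
  have "g (x + (\<Sum>i\<in>insert j S. of_int (k i) *\<^sub>R axis i 1))
      = g ((x + (\<Sum>i\<in>S. of_int (k i) *\<^sub>R axis i 1)) + of_int (k j) *\<^sub>R axis j 1)"
    using insert by (simp add: algebra_simps)
  also have "\<dots> = g x" using shift insert.IH by simp
  finally show ?case .
qed simp

lemma compact_time_cell: "compact ({0..T::real} \<times> cell)"
  unfolding cell_def by (intro compact_Times) auto

lemma periodic_reduce_to_cell:
  fixes f :: "real \<Rightarrow> real^'d \<Rightarrow> 'b"
  assumes T: "0 < T" and per_t: "\<And>t x. f (t + T) x = f t x" and per_x: "\<And>t. periodic_x (f t)"
  obtains t' x' where "t' \<in> {0..T}" "x' \<in> cell" "f t x = f t' x'"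
proof
  define t' where "t' = t + of_int (- \<lfloor>t/T\<rfloor>) * T"
  define x' where "x' = x + (\<Sum>i\<in>UNIV. of_int (- \<lfloor>x$i\<rfloor>) *\<^sub>R axis i (1::real))"
  have "f t' = f t" unfolding t'_def by (rule periodic_shift_int) (use per_t in auto)
  moreover have "f t x' = f t x" unfolding x'_def by (rule periodic_x_shift_sum[OF per_x]) simp
  ultimately show "f t x = f t' x'" by simp
  have "of_int \<lfloor>t/T\<rfloor> * T \<le> t" "t < (of_int \<lfloor>t/T\<rfloor> + 1) * T"
    using T by (simp_all add: pos_le_divide_eq[symmetric] pos_divide_less_eq[symmetric])
  then show "t' \<in> {0..T}" unfolding t'_def by (auto simp: algebra_simps)
  have "x' $ i = x $ i - of_int \<lfloor>x$i\<rfloor>" for i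
  proof -
    have "(\<Sum>j\<in>UNIV. of_int (- \<lfloor>x$j\<rfloor>) *\<^sub>R axis j (1::real)) $ i
        = (\<Sum>j\<in>UNIV. if i = j then of_int (- \<lfloor>x$j\<rfloor>) else 0)"
      unfolding sum_component by (intro sum.cong) (auto simp: axis_def)
    then show ?thesis by (simp add: x'_def)
  qed
  then show "x' \<in> cell"
    unfolding cell_def mem_box_cart Cart_1[symmetric] by simp linarith
qed

lemma periodic_bounded:
  fixes f :: "real \<Rightarrow> real^'d \<Rightarrow> 'b::real_normed_vector"
  assumes T: "0 < T" and per_t: "\<And>t x. f (t + T) x = f t x" and per_x: "\<And>t. periodic_x (f t)"
    and cont: "continuous_on UNIV (\<lambda>z. f (fst z) (snd z))"
  shows "\<exists>B. \<forall>t x. norm (f t x) \<le> B"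
proof -
  obtain B where B: "\<And>z. z \<in> {0..T} \<times> cell \<Longrightarrow> norm (f (fst z) (snd z)) \<le> B"
    using continuous_on_compact_bound[OF compact_time_cell continuous_on_subset[OF cont]] by blast
  have "norm (f t x) \<le> B" for t x
  proof -
    obtain t' x' where "t' \<in> {0..T}" "x' \<in> cell" "f t x = f t' x'"
      by (rule periodic_reduce_to_cell[of T f, OF T per_t per_x])
    then show ?thesis using B[of "(t', x')"] by simp
  qed
  then show ?thesis by blast
qed

lemma C12per_continuous:
  fixes u :: "real \<Rightarrow> real^'d \<Rightarrow> real"
  assumes "C12per T u"
  shows "continuous_on UNIV (\<lambda>z. u (fst z) (snd z))"
    and "continuous_on UNIV (\<lambda>z. dt u (fst z) (snd z))"
    and "continuous_on UNIV (\<lambda>z. grad_x u (fst z) (snd z))"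
    and "continuous_on UNIV (\<lambda>z. lap_x u (fst z) (snd z))"
proof -
  obtain ut ux uxx where
      cont: "continuous_on UNIV (\<lambda>z. u (fst z) (snd z))"
      and cont_t: "continuous_on UNIV (\<lambda>z. ut (fst z) (snd z))"
      and cont_x: "continuous_on UNIV (\<lambda>z. ux (fst z) (snd z))"
      and cont_xx: "continuous_on UNIV (\<lambda>z. uxx (fst z) (snd z) :: real^'d^'d)"
      and d_t: "\<And>t x. ((\<lambda>s. u s x) has_real_derivative ut t x) (at t)"
      and d_x: "\<And>t x. (u t has_derivative (\<lambda>h. ux t x \<bullet> h)) (at x)"
      and d_xx: "\<And>t x. (ux t has_derivative (\<lambda>h. uxx t x *v h)) (at x)"
    using assms unfolding C12per_def by blast
  have "dt u t x = ut t x" for t x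
    unfolding dt_def by (rule DERIV_imp_deriv[OF d_t])
  moreover have "grad_x u t x = ux t x" for t x
    unfolding grad_x_def by (rule gradv_eqI[OF d_x])
  moreover have "lap_x u t x = (\<Sum>i\<in>UNIV. uxx t x $ i $ i)" for t x
    unfolding lap_x_def using pd_pd_eqI[OF d_x d_xx] by simp
  moreover have "continuous_on UNIV (\<lambda>z. \<Sum>i\<in>UNIV. uxx (fst z) (snd z) $ i $ i)"
    by (intro continuous_intros continuous_on_component cont_xx)
  ultimately show "continuous_on UNIV (\<lambda>z. u (fst z) (snd z))"
    and "continuous_on UNIV (\<lambda>z. dt u (fst z) (snd z))"
    and "continuous_on UNIV (\<lambda>z. grad_x u (fst z) (snd z))"
    and "continuous_on UNIV (\<lambda>z. lap_x u (fst z) (snd z))"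
    using cont cont_t cont_x by simp_all
qed

lemma periodic_x_gradv:
  assumes "periodic_x f"
  shows "periodic_x (gradv f)"
proof -
  have "(\<lambda>h. f (x + axis i 1 + h *\<^sub>R axis j 1)) = (\<lambda>h. f (x + h *\<^sub>R axis j 1))" for x i j
    using assms unfolding periodic_x_def by (metis add.commute add.left_commute)
  then show ?thesis by (simp add: periodic_x_def gradv_def pd_def)
qed

lemma admissible_feedback:
  assumes T: "0 < T" and u: "C12per T u" and F: "continuous_on UNIV F"
  shows "admissible T (\<lambda>t x. F (grad_x u t x))"
proof -
  have per_t: "F (grad_x u (t + T) x) = F (grad_x u t x)" for t x
  proof -
    have "u (t + T) = u t" using u by (auto simp: C12per_def)
    then show ?thesis by (simp add: grad_x_def)
  qed
  have per_x: "periodic_x (\<lambda>x. F (grad_x u t x))" for t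
    using periodic_x_gradv[of "u t"] u by (simp add: C12per_def periodic_x_def grad_x_def)
  have cont: "continuous_on UNIV (\<lambda>z. F (grad_x u (fst z) (snd z)))"
    using continuous_on_compose[OF C12per_continuous(3)[OF u] continuous_on_subset[OF F]]
    by (simp add: o_def)
  show ?thesis
    unfolding admissible_def
    using borel_measurable_continuous_onI[OF cont] per_t per_x
      periodic_bounded[where f = "\<lambda>t x. F (grad_x u t x)", OF T per_t per_x cont]
    by blast
qed

section \<open>Measure solutions of the Fokker--Planck equation\<close>

lemma fp_sol_finite_measure:
  assumes "fp_sol T \<alpha> \<eta>"
  shows "finite_measure \<eta>" and "measure \<eta> (space \<eta>) = 1"
  using assms unfolding fp_sol_def by (auto intro: finite_measureI simp: measure_def)

lemma fp_sol_AE_cell: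
  assumes T: "0 < T" and fp: "fp_sol T \<alpha> \<eta>"
  shows "AE z in \<eta>. 0 < fst z \<and> fst z < T \<and> snd z \<in> cell"
proof -
  have sets: "sets \<eta> = sets borel" and total: "emeasure \<eta> (space \<eta>) = 1"
    and full: "emeasure \<eta> ({0..<T} \<times> hcell) = 1"
    and uniform: "\<And>A. A \<in> sets borel \<Longrightarrow> A \<subseteq> {0..<T} \<Longrightarrow> measure \<eta> (A \<times> hcell) = measure lborel A / T"
    using fp unfolding fp_sol_def by auto
  have "hcell \<in> sets (borel :: (real^'d) measure)"
    unfolding hcell_def by measurable
  then have meas: "A \<times> hcell \<in> sets \<eta>" if "A \<in> sets borel" for A :: "real set"
    unfolding sets borel_prod[symmetric] using that by auto
  have "emeasure \<eta> (space \<eta> - {0..<T} \<times> hcell) = 0"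
    using emeasure_compl[OF meas] total full by simp
  then have "AE z in \<eta>. z \<in> {0..<T} \<times> hcell"
    using meas[of "{0..<T}"] by (intro AE_I[where N = "space \<eta> - {0..<T} \<times> hcell"]) auto
  \<comment> \<open>The time marginal of \<eta> is uniform, so the slice t = 0 is null.\<close>
  moreover have "{0} \<times> hcell \<in> null_sets \<eta>"
    using uniform[of "{0}"] meas[of "{0}"] T fp_sol_finite_measure(1)[OF fp]
    by (simp add: null_sets_def finite_measure.emeasure_eq_measure)
  then have "AE z in \<eta>. z \<notin> {0} \<times> hcell" by (rule AE_not_in)
  ultimately show ?thesis
    by eventually_elim (auto simp: hcell_def cell_def mem_box_cart Cart_1[symmetric] less_imp_le)
qed

lemma fp_sol_integrable:
  fixes f :: "real \<times> (real^'d) \<Rightarrow> real"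
  assumes T: "0 < T" and fp: "fp_sol T \<alpha> \<eta>" and f: "f \<in> borel_measurable borel"
    and bound: "\<And>z. z \<in> {0..T} \<times> cell \<Longrightarrow> \<bar>f z\<bar> \<le> B"
  shows "integrable \<eta> f"
proof (rule finite_measure.integrable_const_bound[OF fp_sol_finite_measure(1)[OF fp]])
  show "AE z in \<eta>. norm (f z) \<le> B"
    using fp_sol_AE_cell[OF T fp] by eventually_elim (auto intro: bound less_imp_le)
  have "sets \<eta> = sets borel" using fp unfolding fp_sol_def by blast
  then show "f \<in> borel_measurable \<eta>" using f measurable_cong_sets by blast
qed

text \<open>The formal adjoint of the Fokker--Planck operator; by definition of fp_sol its
  \<eta>-integral vanishes on every C12per test function.\<close>

definition kolmogorov_op ::
    "(real \<Rightarrow> real^'d \<Rightarrow> real^'d) \<Rightarrow> (real \<Rightarrow> real^'d \<Rightarrow> real) \<Rightarrow> real \<times> (real^'d) \<Rightarrow> real" where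
  "kolmogorov_op \<alpha> \<psi> z = dt \<psi> (fst z) (snd z) - lap_x \<psi> (fst z) (snd z)
     + \<alpha> (fst z) (snd z) \<bullet> grad_x \<psi> (fst z) (snd z)"

lemma fp_sol_integral_kolmogorov_op:
  fixes \<alpha> :: "real \<Rightarrow> real^'d \<Rightarrow> real^'d"
  assumes T: "0 < T" and \<alpha>: "admissible T \<alpha>" and fp: "fp_sol T \<alpha> \<eta>" and \<psi>: "C12per T \<psi>"
  shows "integrable \<eta> (\<lambda>z. c - kolmogorov_op \<alpha> \<psi> z)" and "(\<integral>z. c - kolmogorov_op \<alpha> \<psi> z \<partial>\<eta>) = c"
proof -
  note cont = C12per_continuous[OF \<psi>]
  obtain Ba where Ba: "\<And>t x. norm (\<alpha> t x) \<le> Ba" and \<alpha>_meas: "(\<lambda>z. \<alpha> (fst z) (snd z)) \<in> borel_measurable borel"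
    using \<alpha> unfolding admissible_def by blast
  obtain B1 where B1: "\<And>z. z \<in> {0..T} \<times> cell \<Longrightarrow> norm (dt \<psi> (fst z) (snd z)) \<le> B1"
    using continuous_on_compact_bound[OF compact_time_cell continuous_on_subset[OF cont(2)]] by blast
  obtain B2 where B2: "\<And>z. z \<in> {0..T} \<times> cell \<Longrightarrow> norm (grad_x \<psi> (fst z) (snd z)) \<le> B2"
    using continuous_on_compact_bound[OF compact_time_cell continuous_on_subset[OF cont(3)]] by blast
  obtain B3 where B3: "\<And>z. z \<in> {0..T} \<times> cell \<Longrightarrow> norm (lap_x \<psi> (fst z) (snd z)) \<le> B3"
    using continuous_on_compact_bound[OF compact_time_cell continuous_on_subset[OF cont(4)]] by blast
  have K: "integrable \<eta> (kolmogorov_op \<alpha> \<psi>)"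
  proof (rule fp_sol_integrable[OF T fp])
    show "kolmogorov_op \<alpha> \<psi> \<in> borel_measurable borel"
      unfolding kolmogorov_op_def[abs_def]
      by (intro borel_measurable_add borel_measurable_diff borel_measurable_inner \<alpha>_meas
          borel_measurable_continuous_onI cont)
    fix z :: "real \<times> (real^'d)" assume z: "z \<in> {0..T} \<times> cell"
    have "\<bar>\<alpha> (fst z) (snd z) \<bullet> grad_x \<psi> (fst z) (snd z)\<bar>
        \<le> norm (\<alpha> (fst z) (snd z)) * norm (grad_x \<psi> (fst z) (snd z))"
      by (rule Cauchy_Schwarz_ineq2)
    also have "\<dots> \<le> Ba * B2"
      using Ba B2[OF z] order_trans[OF norm_ge_zero Ba] by (intro mult_mono) auto
    finally have "\<bar>\<alpha> (fst z) (snd z) \<bullet> grad_x \<psi> (fst z) (snd z)\<bar> \<le> Ba * B2" .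
    then show "\<bar>kolmogorov_op \<alpha> \<psi> z\<bar> \<le> B1 + B3 + Ba * B2"
      using B1[OF z] B3[OF z] by (simp add: kolmogorov_op_def)
  qed
  have "(\<integral>z. kolmogorov_op \<alpha> \<psi> z \<partial>\<eta>) = 0"
    using fp \<psi> unfolding fp_sol_def kolmogorov_op_def by blast
  moreover have c: "integrable \<eta> (\<lambda>z. c)"
    by (rule finite_measure.integrable_const[OF fp_sol_finite_measure(1)[OF fp]])
  ultimately show "(\<integral>z. c - kolmogorov_op \<alpha> \<psi> z \<partial>\<eta>) = c"
    using fp_sol_finite_measure(2)[OF fp] by (simp add: Bochner_Integration.integral_diff[OF c K])
  show "integrable \<eta> (\<lambda>z. c - kolmogorov_op \<alpha> \<psi> z)"
    using c K by (rule Bochner_Integration.integrable_diff)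
qed

section \<open>The duality formula\<close>

context hamiltonian
begin

lemma fp_sol_integrable_payoff:
  fixes m :: "real \<Rightarrow> real^'d \<Rightarrow> real"
  assumes T: "0 < T" and \<alpha>: "admissible T \<alpha>" and fp: "fp_sol T \<alpha> \<eta>" and m: "C12per T m"
  shows "integrable \<eta> (\<lambda>z. m (fst z) (snd z) - legendre H (\<alpha> (fst z) (snd z)))"
proof -
  obtain Ba where Ba: "\<And>t x. norm (\<alpha> t x) \<le> Ba"
    and \<alpha>_meas: "(\<lambda>z. \<alpha> (fst z) (snd z)) \<in> borel_measurable borel"
    using \<alpha> unfolding admissible_def by blast
  obtain Bm where Bm: "\<And>z. z \<in> {0..T} \<times> cell \<Longrightarrow> norm (m (fst z) (snd z)) \<le> Bm"
    using continuous_on_compact_bound[OF compact_time_cell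
        continuous_on_subset[OF C12per_continuous(1)[OF m]]] by blast
  obtain BL where BL: "\<And>a. a \<in> cball 0 Ba \<Longrightarrow> norm (legendre H a) \<le> BL"
    using continuous_on_compact_bound[OF compact_cball continuous_on_subset[OF continuous_on_legendre]]
    by blast
  show ?thesis
  proof (rule fp_sol_integrable[OF T fp])
    show "(\<lambda>z. m (fst z) (snd z) - legendre H (\<alpha> (fst z) (snd z))) \<in> borel_measurable borel"
      by (intro borel_measurable_diff borel_measurable_continuous_onI C12per_continuous(1)[OF m]
          measurable_compose[OF \<alpha>_meas] continuous_on_legendre)
    fix z :: "real \<times> (real^'d)" assume "z \<in> {0..T} \<times> cell"
    then have "\<bar>m (fst z) (snd z)\<bar> \<le> Bm" "\<bar>legendre H (\<alpha> (fst z) (snd z))\<bar> \<le> BL"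
      using Bm BL[of "\<alpha> (fst z) (snd z)"] Ba[of "fst z" "snd z"] by auto
    then show "\<bar>m (fst z) (snd z) - legendre H (\<alpha> (fst z) (snd z))\<bar> \<le> Bm + BL"
      by linarith
  qed
qed

lemma eigen_payoff_identity:
  assumes "lam + dt \<phi> t x - lap_x \<phi> t x + H (grad_x \<phi> t x) = - m t x"
  shows "m t x - legendre H (\<alpha> t x) = - lam - kolmogorov_op \<alpha> \<phi> (t, x)
    - (legendre H (\<alpha> t x) - (grad_x \<phi> t x \<bullet> \<alpha> t x - H (grad_x \<phi> t x)))"
  using assms by (simp add: kolmogorov_op_def inner_commute algebra_simps)

lemma payoff_le_eigenvalue:
  assumes T: "0 < T" and m: "C12per T m" and \<phi>: "C12per T \<phi>"
    and eig: "\<forall>t x. 0 < t \<and> t < T \<longrightarrow> lam + dt \<phi> t x - lap_x \<phi> t x + H (grad_x \<phi> t x) = - m t x"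
    and \<alpha>: "admissible T \<alpha>" and fp: "fp_sol T \<alpha> \<eta>"
  shows "(\<integral>z. m (fst z) (snd z) - legendre H (\<alpha> (fst z) (snd z)) \<partial>\<eta>) \<le> - lam"
proof -
  note residual = fp_sol_integral_kolmogorov_op[OF T \<alpha> fp \<phi>, of "- lam"]
  have "(\<integral>z. m (fst z) (snd z) - legendre H (\<alpha> (fst z) (snd z)) \<partial>\<eta>)
      \<le> (\<integral>z. - lam - kolmogorov_op \<alpha> \<phi> z \<partial>\<eta>)"
  proof (rule integral_mono_AE[OF fp_sol_integrable_payoff[OF T \<alpha> fp m] residual(1)])
    show "AE z in \<eta>. m (fst z) (snd z) - legendre H (\<alpha> (fst z) (snd z)) \<le> - lam - kolmogorov_op \<alpha> \<phi> z"
      using fp_sol_AE_cell[OF T fp]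
    proof eventually_elim
      case (elim z)
      then show ?case
        using eigen_payoff_identity[of lam \<phi> "fst z" "snd z" m \<alpha>] eig
          fenchel_young[of "grad_x \<phi> (fst z) (snd z)" "\<alpha> (fst z) (snd z)"]
        by (cases z) simp
    qed
  qed
  then show ?thesis using residual(2) by simp
qed

lemma payoff_eq_eigenvalue:
  assumes T: "0 < T" and m: "C12per T m" and \<phi>: "C12per T \<phi>"
    and eig: "\<forall>t x. 0 < t \<and> t < T \<longrightarrow> lam + dt \<phi> t x - lap_x \<phi> t x + H (grad_x \<phi> t x) = - m t x"
    and fp: "fp_sol T (\<lambda>t x. gradv H (grad_x \<phi> t x)) \<eta>"
  shows "(\<integral>z. m (fst z) (snd z) - legendre H (gradv H (grad_x \<phi> (fst z) (snd z))) \<partial>\<eta>) = - lam"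
proof -
  let ?\<alpha> = "\<lambda>t x. gradv H (grad_x \<phi> t x)"
  have \<alpha>: "admissible T ?\<alpha>" by (rule admissible_feedback[OF T \<phi> continuous_on_gradv_H])
  have "(\<integral>z. m (fst z) (snd z) - legendre H (?\<alpha> (fst z) (snd z)) \<partial>\<eta>)
      = (\<integral>z. - lam - kolmogorov_op ?\<alpha> \<phi> z \<partial>\<eta>)"
  proof (rule integral_cong_AE)
    show "AE z in \<eta>. m (fst z) (snd z) - legendre H (?\<alpha> (fst z) (snd z)) = - lam - kolmogorov_op ?\<alpha> \<phi> z"
      using fp_sol_AE_cell[OF T fp]
    proof eventually_elim
      case (elim z)
      then show ?case
        using eigen_payoff_identity[of lam \<phi> "fst z" "snd z" m ?\<alpha>] eig
          legendre_gradv_H[of "grad_x \<phi> (fst z) (snd z)"]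
        by (cases z) (simp add: inner_commute)
    qed
  qed (use fp_sol_integrable_payoff[OF T \<alpha> fp m] fp_sol_integral_kolmogorov_op[OF T \<alpha> fp \<phi>] in auto)
  then show ?thesis using fp_sol_integral_kolmogorov_op(2)[OF T \<alpha> fp \<phi>] by simp
qed

end

theorem mainTheorem10:
  fixes H :: "real^'d \<Rightarrow> real" and T :: real
    and m \<phi> :: "real \<Rightarrow> real^'d \<Rightarrow> real" and lam :: real
  assumes T: "T > 0"
    and H: "H_assms H"
    and m: "C12per T m"
    and phi: "C12per T \<phi>"
    and phi_mean: "(\<integral>z\<in>{0..T} \<times> cell. \<phi> (fst z) (snd z) \<partial>lborel) = 0"
    and eig: "\<forall>t x. 0 < t \<and> t < T \<longrightarrow>
                lam + dt \<phi> t x - lap_x \<phi> t x + H (grad_x \<phi> t x) = - m t x"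
  shows "(\<forall>\<alpha> \<eta>. admissible T \<alpha> \<longrightarrow> fp_sol T \<alpha> \<eta> \<longrightarrow>
            (\<integral>z. m (fst z) (snd z) - legendre H (\<alpha> (fst z) (snd z)) \<partial>\<eta>) \<le> - lam)
       \<and> admissible T (\<lambda>t x. gradv H (grad_x \<phi> t x))
       \<and> (\<forall>\<eta>. fp_sol T (\<lambda>t x. gradv H (grad_x \<phi> t x)) \<eta> \<longrightarrow>
            (\<integral>z. m (fst z) (snd z) - legendre H (gradv H (grad_x \<phi> (fst z) (snd z))) \<partial>\<eta>) = - lam)"
proof -
  interpret hamiltonian H by (rule hamiltonian.intro[OF H])
  have "admissible T (\<lambda>t x. gradv H (grad_x \<phi> t x))"
    by (rule admissible_feedback[OF T phi continuous_on_gradv_H])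
  then show ?thesis
    using payoff_le_eigenvalue[OF T m phi eig] payoff_eq_eigenvalue[OF T m phi eig] by blast
qed

end
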